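(* Let $n,d,a,k$ be positive integers and suppose the triple $(n,d,a)$ is good. Then (1) $(n,d,ka)$ is good; (2) $(n,kd,ka)$ is good.
   Context: For positive integers $N,D,A$, let $R=\mathbb{C}[x_1,\dots,x_N]$ with $\mathfrak{S}_N$ permuting variables and $R_A^{\mathfrak{S}_N}$ the symmetric polynomials homogeneous of degree $A$. The triple $(N,D,A)$ is good if there exists $f\in R_A^{\mathfrak{S}_N}$ such that $x_1^D-x_N^D,\dots,x_{N-1}^D-x_N^D,f$ is a regular sequence (equivalently, $f$ has no zero on $\mathcal{V}_D=\{(z_1,\dots,z_N)\in\mathbb{C}^N: z_i^D=1\ \forall i,\ z_N=1\}$); otherwise it is bad. *)

theory Defs
  imports Complex_Main "HOL-Combinatorics.Permutations"
begin

text \<open>Variables x_1..x_N are indexed by 0..N-1. A homogeneous polynomial of degree A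
in N variables is given by its coefficient function on the (finite) set of exponent
vectors of total degree A supported in {0..<N}.\<close>

definition hmonos :: "nat \<Rightarrow> nat \<Rightarrow> (nat \<Rightarrow> nat) set" where
  "hmonos N A = {m. (\<forall>i\<ge>N. m i = 0) \<and> (\<Sum>i<N. m i) = A}"

definition hpoly_eval :: "nat \<Rightarrow> nat \<Rightarrow> ((nat \<Rightarrow> nat) \<Rightarrow> complex) \<Rightarrow> (nat \<Rightarrow> complex) \<Rightarrow> complex" where
  "hpoly_eval N A c z = (\<Sum>m\<in>hmonos N A. c m * (\<Prod>i<N. z i ^ m i))"

definition symmetric_coeffs :: "nat \<Rightarrow> nat \<Rightarrow> ((nat \<Rightarrow> nat) \<Rightarrow> complex) \<Rightarrow> bool" where
  "symmetric_coeffs N A c \<longleftrightarrow>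
     (\<forall>\<sigma>. \<sigma> permutes {..<N} \<longrightarrow> (\<forall>m\<in>hmonos N A. c (m \<circ> \<sigma>) = c m))"

definition V :: "nat \<Rightarrow> nat \<Rightarrow> (nat \<Rightarrow> complex) set" where
  "V N D = {z. (\<forall>i<N. z i ^ D = 1) \<and> z (N - 1) = 1}"

definition good :: "nat \<Rightarrow> nat \<Rightarrow> nat \<Rightarrow> bool" where
  "good N D A \<longleftrightarrow>
     (\<exists>c. symmetric_coeffs N A c \<and> (\<forall>z\<in>V N D. hpoly_eval N A c z \<noteq> 0))"

end

theory Submission
  imports Defs
begin

text \<open>Both parts come from two closure properties of symmetric homogeneous polynomials.
If \<open>f\<close> is symmetric of degree \<open>a\<close>, then so is \<open>f\<^sup>k\<close> of degree \<open>k a\<close>, and it has the same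
zeros, giving \<open>(n, d, k a)\<close>. Also \<open>f(x\<^sub>1\<^sup>k, \<dots>, x\<^sub>n\<^sup>k)\<close> is symmetric of degree \<open>k a\<close>, and
\<open>z \<mapsto> (z\<^sub>i\<^sup>k)\<^sub>i\<close> maps \<open>V\<^sub>k\<^sub>d\<close> into \<open>V\<^sub>d\<close>, so it has no zero on \<open>V\<^sub>k\<^sub>d\<close>, giving \<open>(n, k d, k a)\<close>.\<close>

definition symmetric_hpoly_fun :: "nat \<Rightarrow> nat \<Rightarrow> ((nat \<Rightarrow> complex) \<Rightarrow> complex) \<Rightarrow> bool" where
  "symmetric_hpoly_fun N A f \<longleftrightarrow> (\<exists>c. symmetric_coeffs N A c \<and> f = hpoly_eval N A c)"

lemma good_iff_symmetric_hpoly_fun: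
  "good N D A \<longleftrightarrow> (\<exists>f. symmetric_hpoly_fun N A f \<and> (\<forall>z\<in>V N D. f z \<noteq> 0))"
  unfolding good_def symmetric_hpoly_fun_def by blast

lemma finite_hmonos: "finite (hmonos N A)"
proof -
  have "hmonos N A \<subseteq> {m. \<forall>i. (i \<in> {..<N} \<longrightarrow> m i \<in> {..A}) \<and> (i \<notin> {..<N} \<longrightarrow> m i = 0)}"
  proof (intro subsetI CollectI allI conjI impI)
    fix m i assume m: "m \<in> hmonos N A"
    show "m i = 0" if "i \<notin> {..<N}" using m that by (simp add: hmonos_def)
    assume "i \<in> {..<N}"
    then have "m i \<le> (\<Sum>j<N. m j)" by (intro member_le_sum) auto
    with m show "m i \<in> {..A}" by (simp add: hmonos_def)
  qed
  then show ?thesis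
    by (rule finite_subset) (rule finite_set_of_finite_funs, auto)
qed

lemma hmonos_permute:
  assumes "\<sigma> permutes {..<N}" "m \<in> hmonos N A"
  shows "m \<circ> \<sigma> \<in> hmonos N A"
  using assms sum.permute[OF assms(1), of m] by (auto simp: hmonos_def permutes_def)

lemma hmonos_add:
  "p \<in> hmonos N A \<Longrightarrow> q \<in> hmonos N B \<Longrightarrow> (\<lambda>i. p i + q i) \<in> hmonos N (A + B)"
  by (auto simp: hmonos_def sum.distrib)

lemma hmonos_mult:
  "p \<in> hmonos N A \<Longrightarrow> (\<lambda>i. k * p i) \<in> hmonos N (k * A)"
  by (auto simp: hmonos_def sum_distrib_left[symmetric])

lemma hmonos_div:
  assumes "m \<in> hmonos N (k * A)" "k > 0" "\<forall>i. k dvd m i"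
  shows "(\<lambda>i. m i div k) \<in> hmonos N A"
proof -
  have "(\<Sum>i<N. m i) = k * (\<Sum>i<N. m i div k)"
    using assms(3) by (simp add: sum_distrib_left)
  then show ?thesis using assms by (auto simp: hmonos_def)
qed

definition hcoeffs_mult ::
    "nat \<Rightarrow> nat \<Rightarrow> nat \<Rightarrow> ((nat \<Rightarrow> nat) \<Rightarrow> complex) \<Rightarrow> ((nat \<Rightarrow> nat) \<Rightarrow> complex) \<Rightarrow> (nat \<Rightarrow> nat) \<Rightarrow> complex" where
  "hcoeffs_mult N A B c1 c2 m =
     (\<Sum>(p, q)\<in>{(p, q)\<in>hmonos N A \<times> hmonos N B. (\<lambda>i. p i + q i) = m}. c1 p * c2 q)"

lemma hpoly_eval_mult:
  "hpoly_eval N (A + B) (hcoeffs_mult N A B c1 c2) z = hpoly_eval N A c1 z * hpoly_eval N B c2 z"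
proof -
  let ?S = "hmonos N A \<times> hmonos N B"
  let ?add = "\<lambda>(p, q) i. p i + q i"
  let ?h = "\<lambda>(p, q). c1 p * c2 q * (\<Prod>i<N. z i ^ (p i + q i))"
  have "hpoly_eval N (A + B) (hcoeffs_mult N A B c1 c2) z
      = (\<Sum>m\<in>hmonos N (A + B). \<Sum>pq\<in>{pq\<in>?S. ?add pq = m}. ?h pq)"
    unfolding hpoly_eval_def hcoeffs_mult_def sum_distrib_right
    by (intro sum.cong) (auto intro!: arg_cong2[where f = sum])
  also have "\<dots> = sum ?h ?S"
    by (rule sum.group) (auto simp: finite_hmonos intro: hmonos_add)
  also have "\<dots> = (\<Sum>p\<in>hmonos N A. \<Sum>q\<in>hmonos N B.
                    (c1 p * (\<Prod>i<N. z i ^ p i)) * (c2 q * (\<Prod>i<N. z i ^ q i)))"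
    unfolding sum.cartesian_product
    by (intro sum.cong refl) (auto simp: power_add prod.distrib mult_ac)
  also have "\<dots> = hpoly_eval N A c1 z * hpoly_eval N B c2 z"
    unfolding hpoly_eval_def sum_product ..
  finally show ?thesis .
qed

lemma symmetric_hcoeffs_mult:
  assumes "symmetric_coeffs N A c1" "symmetric_coeffs N B c2"
  shows "symmetric_coeffs N (A + B) (hcoeffs_mult N A B c1 c2)"
  unfolding symmetric_coeffs_def
proof (intro allI impI ballI)
  fix \<sigma> m assume \<sigma>: "\<sigma> permutes {..<N}" and "m \<in> hmonos N (A + B)"
  let ?S = "hmonos N A \<times> hmonos N B"
  let ?\<tau> = "inv \<sigma>"
  have \<tau>: "?\<tau> permutes {..<N}" using \<sigma> by (rule permutes_inv)
  have inverse: "\<sigma> \<circ> ?\<tau> = id" "?\<tau> \<circ> \<sigma> = id"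
    using \<sigma> by (auto simp: permutes_inv_o)
  show "hcoeffs_mult N A B c1 c2 (m \<circ> \<sigma>) = hcoeffs_mult N A B c1 c2 m"
    unfolding hcoeffs_mult_def
  proof (rule sum.reindex_bij_witness[where i="\<lambda>(p, q). (p \<circ> \<sigma>, q \<circ> \<sigma>)"
                                         and j="\<lambda>(p, q). (p \<circ> ?\<tau>, q \<circ> ?\<tau>)"])
    fix pq assume pq: "pq \<in> {(p, q)\<in>?S. (\<lambda>i. p i + q i) = m \<circ> \<sigma>}"
    obtain p q where [simp]: "pq = (p, q)" by fastforce
    have "(\<lambda>i. p i + q i) \<circ> ?\<tau> = m" using pq by (simp add: comp_assoc inverse)
    then have "(\<lambda>i. (p \<circ> ?\<tau>) i + (q \<circ> ?\<tau>) i) = m" by (simp add: fun_eq_iff)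
    then show "(case pq of (p, q) \<Rightarrow> (p \<circ> ?\<tau>, q \<circ> ?\<tau>)) \<in> {(p, q)\<in>?S. (\<lambda>i. p i + q i) = m}"
      using pq hmonos_permute[OF \<tau>] by auto
    show "(case case pq of (p, q) \<Rightarrow> (p \<circ> ?\<tau>, q \<circ> ?\<tau>) of (p, q) \<Rightarrow> (p \<circ> \<sigma>, q \<circ> \<sigma>)) = pq"
      by (simp add: comp_assoc inverse)
    show "(case case pq of (p, q) \<Rightarrow> (p \<circ> ?\<tau>, q \<circ> ?\<tau>) of (p, q) \<Rightarrow> c1 p * c2 q)
        = (case pq of (p, q) \<Rightarrow> c1 p * c2 q)"
      using pq assms \<tau> unfolding symmetric_coeffs_def by auto
  next
    fix pq assume pq: "pq \<in> {(p, q)\<in>?S. (\<lambda>i. p i + q i) = m}"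
    then show "(case pq of (p, q) \<Rightarrow> (p \<circ> \<sigma>, q \<circ> \<sigma>)) \<in> {(p, q)\<in>?S. (\<lambda>i. p i + q i) = m \<circ> \<sigma>}"
      using hmonos_permute[OF \<sigma>] by (auto simp: fun_eq_iff)
    show "(case case pq of (p, q) \<Rightarrow> (p \<circ> \<sigma>, q \<circ> \<sigma>) of (p, q) \<Rightarrow> (p \<circ> ?\<tau>, q \<circ> ?\<tau>)) = pq"
      by (cases pq) (simp add: comp_assoc inverse)
  qed
qed

definition hcoeffs_subst_power ::
    "nat \<Rightarrow> ((nat \<Rightarrow> nat) \<Rightarrow> complex) \<Rightarrow> (nat \<Rightarrow> nat) \<Rightarrow> complex" where
  "hcoeffs_subst_power k c m = (if \<forall>i. k dvd m i then c (\<lambda>i. m i div k) else 0)"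

lemma hpoly_eval_subst_power:
  assumes "k > 0"
  shows "hpoly_eval N (k * A) (hcoeffs_subst_power k c) z = hpoly_eval N A c (\<lambda>i. z i ^ k)"
proof -
  let ?scale = "\<lambda>p i. k * p i"
  let ?g = "\<lambda>m. hcoeffs_subst_power k c m * (\<Prod>i<N. z i ^ m i)"
  have vanish: "?g m = 0" if "m \<in> hmonos N (k * A) - ?scale ` hmonos N A" for m
  proof -
    have "\<not> (\<forall>i. k dvd m i)"
    proof
      assume dvd: "\<forall>i. k dvd m i"
      then have "m = ?scale (\<lambda>i. m i div k)" by (simp add: fun_eq_iff)
      moreover have "(\<lambda>i. m i div k) \<in> hmonos N A" using that hmonos_div assms dvd by blast
      ultimately have "m \<in> ?scale ` hmonos N A" by (rule image_eqI)
      with that show False by blast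
    qed
    then show ?thesis by (auto simp: hcoeffs_subst_power_def)
  qed
  have "hpoly_eval N (k * A) (hcoeffs_subst_power k c) z = sum ?g (?scale ` hmonos N A)"
    unfolding hpoly_eval_def
    by (rule sum.mono_neutral_right) (use finite_hmonos hmonos_mult vanish in auto)
  also have "\<dots> = sum (?g \<circ> ?scale) (hmonos N A)"
    by (rule sum.reindex) (use assms in \<open>auto simp: inj_on_def fun_eq_iff\<close>)
  also have "\<dots> = hpoly_eval N A c (\<lambda>i. z i ^ k)"
    unfolding hpoly_eval_def using assms
    by (intro sum.cong refl) (simp add: hcoeffs_subst_power_def power_mult)
  finally show ?thesis .
qed

lemma symmetric_hcoeffs_subst_power:
  assumes "symmetric_coeffs N A c" "k > 0"
  shows "symmetric_coeffs N (k * A) (hcoeffs_subst_power k c)"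
  unfolding symmetric_coeffs_def
proof (intro allI impI ballI)
  fix \<sigma> m assume \<sigma>: "\<sigma> permutes {..<N}" and m: "m \<in> hmonos N (k * A)"
  have dvd_permute: "(\<forall>i. k dvd (m \<circ> \<sigma>) i) \<longleftrightarrow> (\<forall>i. k dvd m i)"
    using \<sigma> by (metis comp_apply permutes_surj surj_def)
  show "hcoeffs_subst_power k c (m \<circ> \<sigma>) = hcoeffs_subst_power k c m"
  proof (cases "\<forall>i. k dvd m i")
    case True
    have "c ((\<lambda>i. m i div k) \<circ> \<sigma>) = c (\<lambda>i. m i div k)"
      using assms(1) \<sigma> hmonos_div[OF m assms(2) True] unfolding symmetric_coeffs_def by blast
    then show ?thesis
      using True dvd_permute by (simp add: hcoeffs_subst_power_def comp_def)
  next
    case False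
    then show ?thesis using dvd_permute by (auto simp: hcoeffs_subst_power_def)
  qed
qed

lemma symmetric_hpoly_fun_mult:
  assumes "symmetric_hpoly_fun N A f" "symmetric_hpoly_fun N B g"
  shows "symmetric_hpoly_fun N (A + B) (\<lambda>z. f z * g z)"
proof -
  obtain c1 c2 where "symmetric_coeffs N A c1" "f = hpoly_eval N A c1"
      and "symmetric_coeffs N B c2" "g = hpoly_eval N B c2"
    using assms unfolding symmetric_hpoly_fun_def by blast
  then show ?thesis
    unfolding symmetric_hpoly_fun_def
    by (intro exI[of _ "hcoeffs_mult N A B c1 c2"])
       (simp add: symmetric_hcoeffs_mult hpoly_eval_mult fun_eq_iff)
qed

lemma symmetric_hpoly_fun_power:
  assumes "symmetric_hpoly_fun N A f" "k > 0"
  shows "symmetric_hpoly_fun N (k * A) (\<lambda>z. f z ^ k)"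
  using assms(2)
proof (induction k rule: nat_induct_non_zero)
  case 1
  then show ?case using assms(1) by simp
next
  case (Suc k)
  then show ?case
    using symmetric_hpoly_fun_mult[OF Suc.IH assms(1)] by (simp add: add.commute mult.commute)
qed

lemma symmetric_hpoly_fun_subst_power:
  assumes "symmetric_hpoly_fun N A f" "k > 0"
  shows "symmetric_hpoly_fun N (k * A) (\<lambda>z. f (\<lambda>i. z i ^ k))"
proof -
  obtain c where "symmetric_coeffs N A c" "f = hpoly_eval N A c"
    using assms(1) unfolding symmetric_hpoly_fun_def by blast
  then show ?thesis
    unfolding symmetric_hpoly_fun_def using assms(2)
    by (intro exI[of _ "hcoeffs_subst_power k c"])
       (simp add: symmetric_hcoeffs_subst_power hpoly_eval_subst_power fun_eq_iff)
qed

lemma V_mult_power: "z \<in> V N (k * D) \<Longrightarrow> (\<lambda>i. z i ^ k) \<in> V N D"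
  by (auto simp: V_def power_mult[symmetric])

lemma good_mult_degree:
  assumes "good N D A" "k > 0"
  shows "good N D (k * A)"
proof -
  obtain f where f: "symmetric_hpoly_fun N A f" "\<forall>z\<in>V N D. f z \<noteq> 0"
    using assms(1) good_iff_symmetric_hpoly_fun by blast
  have "symmetric_hpoly_fun N (k * A) (\<lambda>z. f z ^ k)"
    using f(1) assms(2) by (rule symmetric_hpoly_fun_power)
  moreover have "\<forall>z\<in>V N D. f z ^ k \<noteq> 0" using f(2) by simp
  ultimately show ?thesis unfolding good_iff_symmetric_hpoly_fun by blast
qed

lemma good_mult:
  assumes "good N D A" "k > 0"
  shows "good N (k * D) (k * A)"
proof -
  obtain f where f: "symmetric_hpoly_fun N A f" "\<forall>z\<in>V N D. f z \<noteq> 0"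
    using assms(1) good_iff_symmetric_hpoly_fun by blast
  have "symmetric_hpoly_fun N (k * A) (\<lambda>z. f (\<lambda>i. z i ^ k))"
    using f(1) assms(2) by (rule symmetric_hpoly_fun_subst_power)
  moreover have "\<forall>z\<in>V N (k * D). f (\<lambda>i. z i ^ k) \<noteq> 0"
    using f(2) V_mult_power by blast
  ultimately show ?thesis unfolding good_iff_symmetric_hpoly_fun by blast
qed

theorem proposition3p25:
  fixes n d a k :: nat
  assumes "n > 0" "d > 0" "a > 0" "k > 0"
    and "good n d a"
  shows "good n d (k * a) \<and> good n (k * d) (k * a)"
  using good_mult_degree[OF assms(5,4)] good_mult[OF assms(5,4)] ..

end
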